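(* Let $n$ be sufficiently large, let $f\colon\{0,1\}^n\to\{0,1\}$, let $\widetilde{\epsilon}>0$, let $t,r\in[\Lambda]$ with $t\ge r$, and let $H$ be a power of $2$ with $H=O(n/\widetilde{\epsilon}^2)$ and $H2^t\ge\sqrt n$, $H2^r\ge\sqrt n$. Let $I\subseteq[n]$ be nonempty with $|I|\ge H\widetilde{\epsilon}^2/2$, and suppose every $i\in I$ satisfies \[\min\{\mathrm{Score}_i^+,\mathrm{Score}_i^-\}=\min\Big\{\mathrm{Score}^+_{i,t}\cdot\tfrac{2^t}{\sqrt n},\ \mathrm{Score}^-_{i,r}\cdot\tfrac{2^r}{\sqrt n}\Big\}\in\big[1/H,\,2/H\big].\] Let $\alpha=|I|2^t/n$ and $\beta=|I|2^r/n$, and assume $\alpha\ge\log^2 n$. Let $\boldsymbol S$ be a uniformly random subset of $[n]$ of size $2^t$, and let $\boldsymbol I_{\boldsymbol S}\subseteq I\cap\boldsymbol S$ be the set of $i\in I\cap\boldsymbol S$ such that $\boldsymbol S$ is $i$-informative. Then $\alpha/10\le|\boldsymbol I_{\boldsymbol S}|\le 4\alpha$ with probability $\Omega(1)$ (i.e. at least some absolute positive constant).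
   Context: For $x\in\{0,1\}^n$ and $i\in[n]$, $x^{(i)}$ denotes $x$ with its $i$th bit flipped. An edge $(x,x^{(i)})$ is monotone if $f$ strictly increases along it in direction $i$ and anti-monotone if $f$ strictly decreases along it; $E_i^+$, $E_i^-$ denote the monotone and anti-monotone edges in direction $i$. $\textsc{AE-Search}$ is a fixed randomized query procedure that, on input $x\in\{0,1\}^n$ and $S\subseteq[n]$, outputs either an index in $S$ or nothing. $\Lambda=O(\log n)$ is a fixed positive integer parameter with $2^j\le n$ for $j\in[\Lambda]$. $\mathcal{P}_{i,j}$ is the family of subsets of $[n]\setminus\{i\}$ of size $2^j-1$. A pair $(x,S)$ with $S\subseteq[n]\setminus\{i\}$ is a good pair for $E_i^+$ (resp. $E_i^-$) if $(x,x^{(i)})$ is a monotone (resp. anti-monotone) edge and $\textsc{AE-Search}(x,S\cup\{i\})$ returns $i$ with probability at least $1/2$. $\mathrm{GoodFrac}_i^\pm(S)$ is the fraction of $x\in\{0,1\}^n$ such that $(x,S)$ is good for $E_i^\pm$. A point $x$ is $j$-strong for $E_i^\pm$ if $(x,S)$ is good for $E_i^\pm$ for at least $3/4$ of $S\in\mathcal{P}_{i,j}$; $\mathrm{Score}^\pm_{i,j}$ is the fraction of $x$ that are $j$-strong for $E_i^\pm$, and $\mathrm{Score}_i^\pm=\max_{j\in[\Lambda]}\mathrm{Score}^\pm_{i,j}\cdot2^j/\sqrt n$. A set $S'\in\mathcal{P}_{i,t}$ is informative for the $i$th coordinate if (1) $\mathrm{GoodFrac}_i^+(S')\ge0.1\,\widetilde{\epsilon}^2/(\alpha\sqrt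 n)$ and (2) at least a $0.1$ fraction of the $(2^r-1)$-sized subsets $T\subseteq S'$ satisfy $\mathrm{GoodFrac}_i^-(T)\ge0.1\,\widetilde{\epsilon}^2/(\beta\sqrt n)$. A set $S$ of size $2^t$ containing $i$ is $i$-informative if $S\setminus\{i\}$ is informative for the $i$th coordinate. Logarithms are base $2$. *)

theory Defs
  imports "HOL-Probability.Probability"
begin

text \<open>Points of the cube {0,1}^n are encoded as subsets of {..<n} (the set of
coordinates equal to 1); coordinates are indexed by [n] = {..<n}. A Boolean
function is f :: nat set => bool (False = 0, True = 1). The randomized procedure
Srch-Search (for the fixed f) is an abstract map Srch x S giving the output
distribution, an option: Some i (an index) or None (nothing).
The sign flag s is True for the monotone (+) case, False for the anti-monotone (-) case.\<close>

definition cube :: "nat \<Rightarrow> nat set set" where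
  "cube n = Pow {..<n}"

definition flip :: "nat set \<Rightarrow> nat \<Rightarrow> nat set" where
  "flip x i = (if i \<in> x then x - {i} else insert i x)"

definition mono_edge :: "(nat set \<Rightarrow> bool) \<Rightarrow> nat set \<Rightarrow> nat \<Rightarrow> bool" where
  "mono_edge f x i \<longleftrightarrow> \<not> f (x - {i}) \<and> f (insert i x)"

definition anti_edge :: "(nat set \<Rightarrow> bool) \<Rightarrow> nat set \<Rightarrow> nat \<Rightarrow> bool" where
  "anti_edge f x i \<longleftrightarrow> f (x - {i}) \<and> \<not> f (insert i x)"

definition signed_edge :: "bool \<Rightarrow> (nat set \<Rightarrow> bool) \<Rightarrow> nat set \<Rightarrow> nat \<Rightarrow> bool" where
  "signed_edge s f x i = (if s then mono_edge f x i else anti_edge f x i)"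

definition good_pair ::
  "nat \<Rightarrow> (nat set \<Rightarrow> bool) \<Rightarrow> (nat set \<Rightarrow> nat set \<Rightarrow> nat option pmf) \<Rightarrow> bool
   \<Rightarrow> nat \<Rightarrow> nat set \<Rightarrow> nat set \<Rightarrow> bool" where
  "good_pair n f Srch s i x S \<longleftrightarrow>
     S \<subseteq> {..<n} - {i} \<and> signed_edge s f x i \<and> pmf (Srch x (insert i S)) (Some i) \<ge> 1/2"

definition good_frac ::
  "nat \<Rightarrow> (nat set \<Rightarrow> bool) \<Rightarrow> (nat set \<Rightarrow> nat set \<Rightarrow> nat option pmf) \<Rightarrow> bool
   \<Rightarrow> nat \<Rightarrow> nat set \<Rightarrow> real" where
  "good_frac n f Srch s i S = real (card {x \<in> cube n. good_pair n f Srch s i x S}) / 2 ^ n"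

definition Pfam :: "nat \<Rightarrow> nat \<Rightarrow> nat \<Rightarrow> nat set set" where
  "Pfam n i j = {S. S \<subseteq> {..<n} - {i} \<and> card S = 2 ^ j - 1}"

definition strong ::
  "nat \<Rightarrow> (nat set \<Rightarrow> bool) \<Rightarrow> (nat set \<Rightarrow> nat set \<Rightarrow> nat option pmf) \<Rightarrow> bool
   \<Rightarrow> nat \<Rightarrow> nat \<Rightarrow> nat set \<Rightarrow> bool" where
  "strong n f Srch s i j x \<longleftrightarrow>
     real (card {S \<in> Pfam n i j. good_pair n f Srch s i x S}) \<ge> 3/4 * real (card (Pfam n i j))"

definition score_ij ::
  "nat \<Rightarrow> (nat set \<Rightarrow> bool) \<Rightarrow> (nat set \<Rightarrow> nat set \<Rightarrow> nat option pmf) \<Rightarrow> bool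
   \<Rightarrow> nat \<Rightarrow> nat \<Rightarrow> real" where
  "score_ij n f Srch s i j = real (card {x \<in> cube n. strong n f Srch s i j x}) / 2 ^ n"

definition score_i ::
  "nat \<Rightarrow> nat \<Rightarrow> (nat set \<Rightarrow> bool) \<Rightarrow> (nat set \<Rightarrow> nat set \<Rightarrow> nat option pmf) \<Rightarrow> bool
   \<Rightarrow> nat \<Rightarrow> real" where
  "score_i n \<Lambda> f Srch s i = Max ((\<lambda>j. score_ij n f Srch s i j * 2 ^ j / sqrt n) ` {1..\<Lambda>})"

definition informative ::
  "nat \<Rightarrow> (nat set \<Rightarrow> bool) \<Rightarrow> (nat set \<Rightarrow> nat set \<Rightarrow> nat option pmf)
   \<Rightarrow> real \<Rightarrow> real \<Rightarrow> real \<Rightarrow> nat \<Rightarrow> nat \<Rightarrow> nat \<Rightarrow> nat set \<Rightarrow> bool" where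
  "informative n f Srch eps \<alpha> \<beta> t r i S' \<longleftrightarrow>
     S' \<in> Pfam n i t \<and>
     good_frac n f Srch True i S' \<ge> 0.1 * eps\<^sup>2 / (\<alpha> * sqrt n) \<and>
     real (card {T. T \<subseteq> S' \<and> card T = 2 ^ r - 1 \<and>
                    good_frac n f Srch False i T \<ge> 0.1 * eps\<^sup>2 / (\<beta> * sqrt n)})
       \<ge> 0.1 * real (card {T. T \<subseteq> S' \<and> card T = 2 ^ r - 1})"

definition i_informative ::
  "nat \<Rightarrow> (nat set \<Rightarrow> bool) \<Rightarrow> (nat set \<Rightarrow> nat set \<Rightarrow> nat option pmf)
   \<Rightarrow> real \<Rightarrow> real \<Rightarrow> real \<Rightarrow> nat \<Rightarrow> nat \<Rightarrow> nat \<Rightarrow> nat set \<Rightarrow> bool" where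
  "i_informative n f Srch eps \<alpha> \<beta> t r i S \<longleftrightarrow>
     i \<in> S \<and> card S = 2 ^ t \<and> informative n f Srch eps \<alpha> \<beta> t r i (S - {i})"

definition informative_set ::
  "nat \<Rightarrow> (nat set \<Rightarrow> bool) \<Rightarrow> (nat set \<Rightarrow> nat set \<Rightarrow> nat option pmf)
   \<Rightarrow> real \<Rightarrow> real \<Rightarrow> real \<Rightarrow> nat \<Rightarrow> nat \<Rightarrow> nat set \<Rightarrow> nat set \<Rightarrow> nat set" where
  "informative_set n f Srch eps \<alpha> \<beta> t r I S =
     {i \<in> I \<inter> S. i_informative n f Srch eps \<alpha> \<beta> t r i S}"

end

theory Submission
  imports Defs
begin

text \<open>
Fix i \<in> I. Averaging over pairs (x, S) shows that the 3/4-strong points make the sum of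
GoodFrac over P_{i,j} large, so by a reverse Markov inequality all but 5/16 of P_{i,j}
have GoodFrac at least a fifth of Score_{i,j}; the score bounds and |I| \<ge> H eps^2/2 put
both informativeness thresholds below that level. A second averaging, over the
(2^r - 1)-subsets of the sets in P_{i,t}, shows that at least 49/144 of P_{i,t} is
informative for i, so the mean of |I_S| is at least 49/144 \<alpha>. As |I_S| \<le> |I \<inter> S| and
|I \<inter> S| is hypergeometric with mean \<alpha> and variance at most \<alpha>, the pointwise bound
|I_S| \<le> 4\<alpha> [\<alpha>/10 \<le> |I_S| \<le> 4\<alpha>] + \<alpha>/10 + 4 (|I \<inter> S| - \<alpha>)^2 / (9\<alpha>) together with
\<alpha> \<ge> 16 (from \<alpha> \<ge> log^2 n and n \<ge> 16) gives probability at least 1/20.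
\<close>

lemma real_card_filter_eq_sum:
  assumes "finite B"
  shows "real (card {y\<in>B. P y}) = (\<Sum>y\<in>B. if P y then 1 else 0)"
  using assms by (simp add: sum.If_cases Int_def conj_commute)

lemma sum_card_filter_swap:
  assumes "finite A" "finite B"
  shows "(\<Sum>x\<in>A. real (card {y\<in>B. R x y})) = (\<Sum>y\<in>B. real (card {x\<in>A. R x y}))"
  using assms by (simp add: real_card_filter_eq_sum sum.swap[of _ A B])

lemma reverse_markov_card:
  fixes g :: "'a \<Rightarrow> real"
  assumes fin: "finite P" and le_U: "\<And>S. S \<in> P \<Longrightarrow> g S \<le> U"
    and sum_ge: "q * U * real (card P) \<le> (\<Sum>S\<in>P. g S)"
    and \<theta>: "\<theta> \<le> \<delta> * U" and \<delta>: "\<delta> < 1" and U: "U > 0"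
  shows "real (card {S\<in>P. g S < \<theta>}) \<le> (1 - q) / (1 - \<delta>) * real (card P)"
proof -
  define B where "B = {S\<in>P. g S < \<theta>}"
  have B: "finite B" "B \<subseteq> P" using fin by (auto simp: B_def)
  have "(\<Sum>S\<in>P. g S) = (\<Sum>S\<in>B. g S) + (\<Sum>S\<in>P - B. g S)"
    using B fin by (metis add.commute sum.subset_diff)
  also have "(\<Sum>S\<in>B. g S) \<le> (\<Sum>S\<in>B. \<theta>)" by (rule sum_mono) (auto simp: B_def)
  also have "(\<Sum>S\<in>P - B. g S) \<le> (\<Sum>S\<in>P - B. U)" by (rule sum_mono) (use le_U in auto)
  finally have "q * U * real (card P) \<le> real (card B) * \<theta> + real (card (P - B)) * U"
    using sum_ge by simp
  moreover have "real (card (P - B)) = real (card P) - real (card B)"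
    using B fin by (simp add: card_Diff_subset card_mono of_nat_diff)
  ultimately have "real (card B) * (U - \<theta>) \<le> (1 - q) * U * real (card P)"
    by (simp add: algebra_simps)
  moreover have "real (card B) * ((1 - \<delta>) * U) \<le> real (card B) * (U - \<theta>)"
    using \<theta> by (intro mult_left_mono) (auto simp: algebra_simps)
  ultimately have "real (card B) * (1 - \<delta>) * U \<le> (1 - q) * real (card P) * U"
    by (simp add: algebra_simps)
  then have "real (card B) * (1 - \<delta>) \<le> (1 - q) * real (card P)"
    using U by (rule mult_right_le_imp_le)
  then show ?thesis
    using \<delta> by (simp add: B_def field_simps)
qed

lemma card_supersets_of_size:
  assumes A: "finite A" and TA: "T \<subseteq> A" and M: "card T \<le> M"
  shows "card {S. S \<subseteq> A \<and> card S = M \<and> T \<subseteq> S} = (card A - card T) choose (M - card T)"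
proof -
  have T: "finite T" using A TA finite_subset by blast
  have "bij_betw (\<lambda>S. S - T) {S. S \<subseteq> A \<and> card S = M \<and> T \<subseteq> S} {U. U \<subseteq> A - T \<and> card U = M - card T}"
  proof (rule bij_betw_byWitness[where f' = "\<lambda>U. U \<union> T"])
    show "(\<lambda>U. U \<union> T) ` {U. U \<subseteq> A - T \<and> card U = M - card T} \<subseteq> {S. S \<subseteq> A \<and> card S = M \<and> T \<subseteq> S}"
    proof
      fix S assume "S \<in> (\<lambda>U. U \<union> T) ` {U. U \<subseteq> A - T \<and> card U = M - card T}"
      then obtain U where U: "U \<subseteq> A - T" "card U = M - card T" and S: "S = U \<union> T" by auto
      then have "finite U" using A finite_subset by blast
      then have "card S = M" using U S T M by (subst S, subst card_Un_disjoint) auto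
      then show "S \<in> {S. S \<subseteq> A \<and> card S = M \<and> T \<subseteq> S}" using U S TA by auto
    qed
  qed (use T in \<open>auto simp: card_Diff_subset\<close>)
  then have "card {S. S \<subseteq> A \<and> card S = M \<and> T \<subseteq> S} = card {U. U \<subseteq> A - T \<and> card U = M - card T}"
    by (rule bij_betw_same_card)
  also have "\<dots> = (card A - card T) choose (M - card T)"
    using A TA T by (simp add: n_subsets card_Diff_subset)
  finally show ?thesis .
qed

lemma card_subsets_containing:
  assumes "i < n" "1 \<le> m"
  shows "card {S. S \<subseteq> {..<n} \<and> card S = m \<and> i \<in> S} = (n - 1) choose (m - 1)"
  using card_supersets_of_size[of "{..<n}" "{i}" m] assms by simp

lemma card_subsets_containing_two:
  assumes "i < n" "j < n" "i \<noteq> j" "2 \<le> m"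
  shows "card {S. S \<subseteq> {..<n} \<and> card S = m \<and> i \<in> S \<and> j \<in> S} = (n - 2) choose (m - 2)"
  using card_supersets_of_size[of "{..<n}" "{i, j}" m] assms by (simp add: numeral_2_eq_2)

lemma finite_Pfam: "finite (Pfam n i j)"
  by (rule finite_subset[of _ "Pow {..<n}"]) (auto simp: Pfam_def)

lemma card_Pfam: "i < n \<Longrightarrow> card (Pfam n i j) = (n - 1) choose (2 ^ j - 1)"
  by (simp add: Pfam_def n_subsets)

lemma card_Pfam_low_good_frac:
  assumes \<theta>: "\<theta> \<le> score_ij n f Srch s i j / 5" and pos: "0 < score_ij n f Srch s i j"
  shows "real (card {S\<in>Pfam n i j. good_frac n f Srch s i S < \<theta>}) \<le> 5/16 * real (card (Pfam n i j))"
proof -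
  define P where "P = Pfam n i j"
  define X where "X = {x\<in>cube n. strong n f Srch s i j x}"
  define g where "g S = real (card {x\<in>X. good_pair n f Srch s i x S})" for S
  have P: "finite P" by (simp add: P_def finite_Pfam)
  have X: "finite X" "X \<subseteq> cube n" by (auto simp: X_def cube_def)
  have score: "score_ij n f Srch s i j = real (card X) / 2 ^ n" by (simp add: score_ij_def X_def)
  have g_le: "g S \<le> real (card X)" if "S \<in> P" for S
    unfolding g_def using X by (auto intro: card_mono)
  have "3/4 * real (card X) * real (card P) = (\<Sum>x\<in>X. 3/4 * real (card P))" by simp
  also have "\<dots> \<le> (\<Sum>x\<in>X. real (card {S\<in>P. good_pair n f Srch s i x S}))"
    by (rule sum_mono) (auto simp: X_def strong_def P_def)
  also have "\<dots> = (\<Sum>S\<in>P. g S)" unfolding g_def by (rule sum_card_filter_swap[OF X(1) P])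
  finally have sum_g: "3/4 * real (card X) * real (card P) \<le> (\<Sum>S\<in>P. g S)" .
  have low: "{S\<in>P. good_frac n f Srch s i S < \<theta>} \<subseteq> {S\<in>P. g S < \<theta> * 2 ^ n}"
  proof safe
    fix S assume "good_frac n f Srch s i S < \<theta>"
    then have "real (card {x \<in> cube n. good_pair n f Srch s i x S}) < \<theta> * 2 ^ n"
      by (simp add: good_frac_def field_simps)
    moreover have "g S \<le> real (card {x \<in> cube n. good_pair n f Srch s i x S})"
      unfolding g_def using X by (auto intro!: card_mono simp: cube_def)
    ultimately show "g S < \<theta> * 2 ^ n" by linarith
  qed
  have "real (card {S\<in>P. good_frac n f Srch s i S < \<theta>}) \<le> real (card {S\<in>P. g S < \<theta> * 2 ^ n})"
    using P by (simp add: card_mono[OF _ low])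
  also have "\<dots> \<le> (1 - 3/4) / (1 - 1/5) * real (card P)"
    by (rule reverse_markov_card[OF P g_le sum_g]) (use \<theta> pos score in \<open>auto simp: field_simps\<close>)
  finally show ?thesis by (simp add: P_def)
qed

lemma card_few_good_subsets_le:
  fixes G :: "'a set set"
  assumes A: "finite A" and aM: "a \<le> M" and G: "G \<subseteq> {T. T \<subseteq> A \<and> card T = a}"
    and bad: "real (card ({T. T \<subseteq> A \<and> card T = a} - G)) \<le> q * real (card {T. T \<subseteq> A \<and> card T = a})"
    and \<delta>: "\<delta> < 1"
  shows "real (card {S. S \<subseteq> A \<and> card S = M \<and>
             real (card {T\<in>G. T \<subseteq> S}) < \<delta> * real (card {T. T \<subseteq> S \<and> card T = a})})
           \<le> q / (1 - \<delta>) * real (card {S. S \<subseteq> A \<and> card S = M})"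
proof -
  define Pa where "Pa = {T. T \<subseteq> A \<and> card T = a}"
  define PM where "PM = {S. S \<subseteq> A \<and> card S = M}"
  define K where "K = (card A - a) choose (M - a)"
  define L where "L = M choose a"
  define g where "g S = real (card {T\<in>G. T \<subseteq> S})" for S
  have Pa: "finite Pa" and PM: "finite PM" using A by (simp_all add: Pa_def PM_def)
  have G_fin: "finite G" using G Pa finite_subset unfolding Pa_def by blast
  have L_pos: "real L > 0" using aM by (simp add: L_def)
  have subsets_S: "{T. T \<subseteq> S \<and> card T = a} = {T\<in>Pa. T \<subseteq> S}" if "S \<in> PM" for S
    using that by (auto simp: Pa_def PM_def)
  have card_subsets_S: "card {T. T \<subseteq> S \<and> card T = a} = L" if "S \<in> PM" for S
    using that A finite_subset by (fastforce simp: n_subsets L_def PM_def)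
  have card_supersets_T: "card {S\<in>PM. T \<subseteq> S} = K" if "T \<in> Pa" for T
  proof -
    have "{S\<in>PM. T \<subseteq> S} = {S. S \<subseteq> A \<and> card S = M \<and> T \<subseteq> S}" by (auto simp: PM_def)
    then show ?thesis using that card_supersets_of_size[OF A, of T M] aM by (auto simp: Pa_def K_def)
  qed
  have "real (card PM) * real L = (\<Sum>S\<in>PM. real (card {T\<in>Pa. T \<subseteq> S}))"
    using subsets_S card_subsets_S by simp
  also have "\<dots> = (\<Sum>T\<in>Pa. real (card {S\<in>PM. T \<subseteq> S}))" by (rule sum_card_filter_swap[OF PM Pa])
  also have "\<dots> = real (card Pa) * real K" using card_supersets_T by simp
  finally have double_count: "real (card PM) * real L = real (card Pa) * real K" .
  have "real (card (Pa - G)) = real (card Pa) - real (card G)"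
    using G Pa G_fin by (simp add: Pa_def card_Diff_subset card_mono of_nat_diff)
  then have "(1 - q) * real (card Pa) \<le> real (card G)" using bad by (simp add: Pa_def algebra_simps)
  then have "(1 - q) * real L * real (card PM) \<le> real (card G) * real K"
    using double_count by (metis mult.commute mult.left_commute mult_right_mono of_nat_0_le_iff)
  also have "\<dots> = (\<Sum>T\<in>G. real (card {S\<in>PM. T \<subseteq> S}))"
    using card_supersets_T G by (simp add: Pa_def subset_iff)
  also have "\<dots> = (\<Sum>S\<in>PM. g S)" unfolding g_def by (rule sum_card_filter_swap[symmetric, OF PM G_fin])
  finally have sum_g: "(1 - q) * real L * real (card PM) \<le> (\<Sum>S\<in>PM. g S)" .
  have g_le: "g S \<le> real L" if "S \<in> PM" for S
  proof -
    have "finite {T. T \<subseteq> S \<and> card T = a}"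
      using that A by (auto simp: PM_def intro: finite_subset[of _ "Pow S"] rev_finite_subset)
    then have "card {T\<in>G. T \<subseteq> S} \<le> card {T. T \<subseteq> S \<and> card T = a}"
      using G by (intro card_mono) auto
    then show ?thesis using card_subsets_S[OF that] by (simp add: g_def)
  qed
  have "{S\<in>PM. g S < \<delta> * real (card {T. T \<subseteq> S \<and> card T = a})} = {S\<in>PM. g S < \<delta> * real L}"
    using card_subsets_S by auto
  moreover have "real (card {S\<in>PM. g S < \<delta> * real L}) \<le> (1 - (1 - q)) / (1 - \<delta>) * real (card PM)"
    by (rule reverse_markov_card[OF PM g_le sum_g order_refl \<delta> L_pos])
  ultimately show ?thesis by (simp add: PM_def g_def conj_commute)
qed

lemma card_informative_ge:
  assumes plus: "0.1 * eps\<^sup>2 / (\<alpha> * sqrt n) \<le> score_ij n f Srch True i t / 5"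
      "0 < score_ij n f Srch True i t"
    and minus: "0.1 * eps\<^sup>2 / (\<beta> * sqrt n) \<le> score_ij n f Srch False i r / 5"
      "0 < score_ij n f Srch False i r"
    and rt: "r \<le> t"
  shows "49/144 * real (card (Pfam n i t)) \<le> real (card {S'. informative n f Srch eps \<alpha> \<beta> t r i S'})"
proof -
  define \<theta>\<^sub>1 where "\<theta>\<^sub>1 = 0.1 * eps\<^sup>2 / (\<alpha> * sqrt n)"
  define \<theta>\<^sub>2 where "\<theta>\<^sub>2 = 0.1 * eps\<^sup>2 / (\<beta> * sqrt n)"
  define A where "A = {..<n} - {i}"
  define a :: nat where "a = 2 ^ r - 1"
  define Inf where "Inf = {S'. informative n f Srch eps \<alpha> \<beta> t r i S'}"
  define Good where "Good = {T\<in>Pfam n i r. \<theta>\<^sub>2 \<le> good_frac n f Srch False i T}"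
  define B\<^sub>1 where "B\<^sub>1 = {S\<in>Pfam n i t. good_frac n f Srch True i S < \<theta>\<^sub>1}"
  define B\<^sub>2 where "B\<^sub>2 = {S. S \<subseteq> A \<and> card S = 2 ^ t - 1 \<and>
      real (card {T\<in>Good. T \<subseteq> S}) < 1/10 * real (card {T. T \<subseteq> S \<and> card T = a})}"
  have Pfam_A: "Pfam n i j = {S. S \<subseteq> A \<and> card S = 2 ^ j - 1}" for j
    by (simp add: Pfam_def A_def)
  have B\<^sub>1: "real (card B\<^sub>1) \<le> 5/16 * real (card (Pfam n i t))"
    unfolding B\<^sub>1_def by (rule card_Pfam_low_good_frac) (use plus in \<open>auto simp: \<theta>\<^sub>1_def\<close>)
  have "Pfam n i r - Good = {T\<in>Pfam n i r. good_frac n f Srch False i T < \<theta>\<^sub>2}"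
    by (auto simp: Good_def)
  then have "real (card ({T. T \<subseteq> A \<and> card T = a} - Good)) \<le> 5/16 * real (card {T. T \<subseteq> A \<and> card T = a})"
    using card_Pfam_low_good_frac[of \<theta>\<^sub>2 n f Srch False i r] minus
    by (simp add: Pfam_A a_def \<theta>\<^sub>2_def)
  from card_few_good_subsets_le[OF _ _ _ this, where \<delta> = "1/10" and M = "2 ^ t - 1"]
  have B\<^sub>2: "real (card B\<^sub>2) \<le> 25/72 * real (card (Pfam n i t))"
    using rt by (auto simp: B\<^sub>2_def Pfam_A A_def a_def Good_def diff_le_mono power_increasing)
  have "Pfam n i t \<subseteq> Inf \<union> B\<^sub>1 \<union> B\<^sub>2"
  proof
    fix S assume S: "S \<in> Pfam n i t"
    then have "{T. T \<subseteq> S \<and> card T = 2 ^ r - 1 \<and> \<theta>\<^sub>2 \<le> good_frac n f Srch False i T} = {T\<in>Good. T \<subseteq> S}"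
      by (auto simp: Good_def Pfam_def)
    with S show "S \<in> Inf \<union> B\<^sub>1 \<union> B\<^sub>2"
      by (auto simp: Inf_def informative_def B\<^sub>1_def B\<^sub>2_def Pfam_A \<theta>\<^sub>1_def \<theta>\<^sub>2_def a_def)
  qed
  moreover have "finite Inf" "finite B\<^sub>1" "finite B\<^sub>2"
    using finite_Pfam[of n i t] by (auto simp: Inf_def informative_def B\<^sub>1_def B\<^sub>2_def Pfam_A
        intro: rev_finite_subset)
  ultimately have "card (Pfam n i t) \<le> card Inf + card B\<^sub>1 + card B\<^sub>2"
    by (meson card_Un_le card_mono finite_UnI le_trans add_le_mono order_refl)
  with B\<^sub>1 B\<^sub>2 show ?thesis unfolding Inf_def by linarith
qed

lemma sum_card_Int_subsets:
  assumes I: "I \<subseteq> {..<n}" and m: "1 \<le> m"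
  shows "(\<Sum>S\<in>{S. S \<subseteq> {..<n} \<and> card S = m}. real (card (I \<inter> S)))
           = real (card I) * real ((n - 1) choose (m - 1))"
proof -
  define F where "F = {S. S \<subseteq> {..<n} \<and> card S = m}"
  have F: "finite F" and I_fin: "finite I" using I finite_subset by (auto simp: F_def)
  have "(\<Sum>S\<in>F. real (card (I \<inter> S))) = (\<Sum>S\<in>F. real (card {i\<in>I. i \<in> S}))"
    by (simp add: Int_def)
  also have "\<dots> = (\<Sum>i\<in>I. real (card {S\<in>F. i \<in> S}))" by (rule sum_card_filter_swap[OF F I_fin])
  also have "\<dots> = (\<Sum>i\<in>I. real ((n - 1) choose (m - 1)))"
    using I m card_subsets_containing by (intro sum.cong) (auto simp: F_def conj_assoc)
  finally show ?thesis by (simp add: F_def)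
qed

lemma sum_card_Int_subsets_squared:
  assumes I: "I \<subseteq> {..<n}" and m: "2 \<le> m"
  shows "(\<Sum>S\<in>{S. S \<subseteq> {..<n} \<and> card S = m}. real (card (I \<inter> S)) ^ 2)
     = real (card I) * real ((n - 1) choose (m - 1))
       + real (card I) * (real (card I) - 1) * real ((n - 2) choose (m - 2))"
proof -
  define F where "F = {S. S \<subseteq> {..<n} \<and> card S = m}"
  define C\<^sub>1 where "C\<^sub>1 = real ((n - 1) choose (m - 1))"
  define C\<^sub>2 where "C\<^sub>2 = real ((n - 2) choose (m - 2))"
  have F: "finite F" and I_fin: "finite I" using I finite_subset by (auto simp: F_def)
  have "(\<Sum>S\<in>F. real (card (I \<inter> S)) ^ 2) = (\<Sum>S\<in>F. real (card {p\<in>I \<times> I. fst p \<in> S \<and> snd p \<in> S}))"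
  proof (rule sum.cong)
    fix S
    have "{p\<in>I \<times> I. fst p \<in> S \<and> snd p \<in> S} = (I \<inter> S) \<times> (I \<inter> S)" by auto
    then show "real (card (I \<inter> S)) ^ 2 = real (card {p\<in>I \<times> I. fst p \<in> S \<and> snd p \<in> S})"
      by (simp add: card_cartesian_product power2_eq_square)
  qed simp
  also have "\<dots> = (\<Sum>p\<in>I \<times> I. real (card {S\<in>F. fst p \<in> S \<and> snd p \<in> S}))"
    by (rule sum_card_filter_swap) (use F I_fin in auto)
  also have "\<dots> = (\<Sum>(i, j)\<in>I \<times> I. if i = j then C\<^sub>1 else C\<^sub>2)"
  proof (rule sum.cong)
    fix p assume p: "p \<in> I \<times> I"
    then have "fst p < n" "snd p < n" using I by auto
    with p show "real (card {S\<in>F. fst p \<in> S \<and> snd p \<in> S}) = (case p of (i, j) \<Rightarrow> if i = j then C\<^sub>1 else C\<^sub>2)"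
      using I m card_subsets_containing[of "fst p" n m] card_subsets_containing_two[of "fst p" n "snd p" m]
      by (auto simp: F_def C\<^sub>1_def C\<^sub>2_def conj_assoc split: prod.split)
  qed simp
  also have "\<dots> = (\<Sum>i\<in>I. C\<^sub>1 + (\<Sum>j\<in>I - {i}. C\<^sub>2))"
    unfolding sum.cartesian_product[symmetric]
    by (intro sum.cong refl) (use I_fin in \<open>simp add: sum.remove[of I] if_distrib cong: if_cong\<close>)
  also have "\<dots> = (\<Sum>i\<in>I. C\<^sub>1 + (real (card I) - 1) * C\<^sub>2)"
  proof (intro sum.cong refl)
    fix i assume "i \<in> I"
    then have "1 \<le> card I" using I_fin by (auto simp: Suc_le_eq card_gt_0_iff)
    then show "C\<^sub>1 + (\<Sum>j\<in>I - {i}. C\<^sub>2) = C\<^sub>1 + (real (card I) - 1) * C\<^sub>2"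
      using \<open>i \<in> I\<close> I_fin by (simp add: of_nat_diff)
  qed
  finally show ?thesis by (simp add: F_def C\<^sub>1_def C\<^sub>2_def algebra_simps)
qed

lemma real_binomial_pred_eq:
  assumes "0 < m" "0 < n"
  shows "real ((n - 1) choose (m - 1)) = real m / real n * real (n choose m)"
  using times_binomial_minus1_eq[of m n] assms
  by (simp add: field_simps flip: of_nat_mult)

lemma hypergeometric_variance_le_mean:
  assumes I: "I \<subseteq> {..<n}" and m: "2 \<le> m" "m \<le> n"
  defines "\<alpha> \<equiv> real (card I) * real m / real n"
  shows "(\<Sum>S\<in>{S. S \<subseteq> {..<n} \<and> card S = m}. (real (card (I \<inter> S)) - \<alpha>)\<^sup>2)
           \<le> \<alpha> * real (n choose m)"
proof -
  define F where "F = {S. S \<subseteq> {..<n} \<and> card S = m}"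
  define Y where "Y S = real (card (I \<inter> S))" for S
  define k where "k = real (card I)"
  define M where "M = real (n choose m)"
  define C\<^sub>1 where "C\<^sub>1 = real ((n - 1) choose (m - 1))"
  define C\<^sub>2 where "C\<^sub>2 = real ((n - 2) choose (m - 2))"
  have n: "real n \<ge> 2" using m by linarith
  have card_F: "real (card F) = M" by (simp add: F_def M_def n_subsets)
  have "(m - 1) * ((n - 1) choose (m - 1)) = (n - 1) * ((n - 2) choose (m - 2))"
    using times_binomial_minus1_eq[of "m - 1" "n - 1"] m by (simp add: numeral_2_eq_2)
  then have "real (m - 1) * C\<^sub>1 = real (n - 1) * C\<^sub>2"
    unfolding C\<^sub>1_def C\<^sub>2_def by (metis of_nat_mult)
  then have absorb\<^sub>2: "(real m - 1) * C\<^sub>1 = (real n - 1) * C\<^sub>2"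
    using m by (simp add: of_nat_diff)
  have kC\<^sub>1: "k * C\<^sub>1 = \<alpha> * M"
    using real_binomial_pred_eq[of m n] m by (simp add: \<alpha>_def k_def C\<^sub>1_def M_def)
  have "(\<Sum>S\<in>F. Y S) = k * C\<^sub>1"
    using sum_card_Int_subsets[OF I, of m] m by (simp add: F_def Y_def k_def C\<^sub>1_def)
  then have sum_Y: "(\<Sum>S\<in>F. Y S) = \<alpha> * M"
    using kC\<^sub>1 by simp
  have sum_Y2: "(\<Sum>S\<in>F. (Y S)\<^sup>2) = k * C\<^sub>1 + k * (k - 1) * C\<^sub>2"
    using sum_card_Int_subsets_squared[OF I m(1)] by (simp add: F_def Y_def k_def C\<^sub>1_def C\<^sub>2_def)
  have pairs: "k * (k - 1) * C\<^sub>2 \<le> \<alpha>\<^sup>2 * M"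
  proof -
    have "k \<le> real n" using card_mono[OF _ I] by (simp add: k_def)
    then have "0 \<le> k * (real n - real m) + real n * (real m - 1)"
      using m by (simp add: k_def)
    then have key: "(k - 1) * (real m - 1) * real n \<le> k * real m * (real n - 1)"
      by (simp add: algebra_simps)
    have "k * (k - 1) * C\<^sub>2 * ((real n - 1) * real n) = k * (k - 1) * real n * ((real n - 1) * C\<^sub>2)"
      by (simp add: algebra_simps)
    also have "\<dots> = k * (k - 1) * real n * ((real m - 1) * C\<^sub>1)"
      by (simp only: absorb\<^sub>2)
    also have "\<dots> = k * ((k - 1) * (real m - 1) * real n) * C\<^sub>1"
      by (simp add: algebra_simps)
    also have "\<dots> \<le> k * (k * real m * (real n - 1)) * C\<^sub>1"
      using key by (intro mult_right_mono mult_left_mono) (auto simp: k_def C\<^sub>1_def)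
    also have "\<dots> = (k * C\<^sub>1) * (k * real m) * (real n - 1)"
      by (simp add: algebra_simps)
    also have "\<dots> = (\<alpha> * M) * (\<alpha> * real n) * (real n - 1)"
      using kC\<^sub>1 n by (simp add: \<alpha>_def k_def)
    also have "\<dots> = \<alpha>\<^sup>2 * M * ((real n - 1) * real n)"
      by (simp add: power2_eq_square algebra_simps)
    finally show ?thesis using n by (simp add: mult_le_cancel_right)
  qed
  have "(\<Sum>S\<in>F. (Y S - \<alpha>)\<^sup>2) = (\<Sum>S\<in>F. (Y S)\<^sup>2 - 2 * \<alpha> * Y S + \<alpha>\<^sup>2)"
    by (simp add: power2_diff algebra_simps)
  also have "\<dots> = (\<Sum>S\<in>F. (Y S)\<^sup>2) - 2 * \<alpha> * (\<Sum>S\<in>F. Y S) + \<alpha>\<^sup>2 * M"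
    by (simp add: sum.distrib sum_subtractf sum_distrib_left card_F)
  also have "\<dots> = k * (k - 1) * C\<^sub>2 - \<alpha>\<^sup>2 * M + \<alpha> * M"
    unfolding sum_Y sum_Y2 kC\<^sub>1 by (simp add: power2_eq_square)
  also have "\<dots> \<le> \<alpha> * M"
    using pairs by simp
  finally show ?thesis by (simp add: F_def Y_def M_def)
qed

lemma card_i_informative_supersets:
  assumes "i < n"
  shows "card {S. S \<subseteq> {..<n} \<and> i_informative n f Srch eps \<alpha> \<beta> t r i S}
           = card {S'. informative n f Srch eps \<alpha> \<beta> t r i S'}"
proof -
  let ?Inf = "{S'. informative n f Srch eps \<alpha> \<beta> t r i S'}"
  have Inf: "S' \<subseteq> {..<n} - {i} \<and> card S' = 2 ^ t - 1" if "S' \<in> ?Inf" for S'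
    using that by (simp add: informative_def Pfam_def)
  have "{S. S \<subseteq> {..<n} \<and> i_informative n f Srch eps \<alpha> \<beta> t r i S} = insert i ` ?Inf"
  proof (intro equalityI subsetI)
    fix S assume S: "S \<in> {S. S \<subseteq> {..<n} \<and> i_informative n f Srch eps \<alpha> \<beta> t r i S}"
    then have "S = insert i (S - {i})" "S - {i} \<in> ?Inf" by (auto simp: i_informative_def)
    then show "S \<in> insert i ` ?Inf" by (rule image_eqI)
  next
    fix S assume "S \<in> insert i ` ?Inf"
    then obtain S' where S': "S' \<in> ?Inf" and S: "S = insert i S'" by auto
    then have "finite S'" "i \<notin> S'" "S - {i} = S'" using Inf[OF S'] finite_subset by auto
    then show "S \<in> {S. S \<subseteq> {..<n} \<and> i_informative n f Srch eps \<alpha> \<beta> t r i S}"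
      using Inf[OF S'] S S' assms by (auto simp: i_informative_def)
  qed
  moreover have "inj_on (insert i) ?Inf"
  proof (rule inj_onI)
    fix A B assume "A \<in> ?Inf" "B \<in> ?Inf" "insert i A = insert i B"
    then show "A = B" using Inf by (metis Diff_iff Diff_insert_absorb insertI1 subsetD)
  qed
  ultimately show ?thesis by (simp add: card_image)
qed

lemma sum_card_informative_set_ge:
  assumes I: "I \<subseteq> {..<n}"
    and each: "\<And>i. i \<in> I \<Longrightarrow> c \<le> real (card {S'. informative n f Srch eps \<alpha> \<beta> t r i S'})"
  shows "real (card I) * c
           \<le> (\<Sum>S\<in>{S. S \<subseteq> {..<n} \<and> card S = 2 ^ t}. real (card (informative_set n f Srch eps \<alpha> \<beta> t r I S)))"
proof -
  define F where "F = {S. S \<subseteq> {..<n} \<and> card S = 2 ^ t}"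
  have F: "finite F" and I_fin: "finite I" using I finite_subset by (auto simp: F_def)
  have "real (card I) * c \<le> (\<Sum>i\<in>I. real (card {S'. informative n f Srch eps \<alpha> \<beta> t r i S'}))"
    using each by (rule sum_bounded_below)
  also have "\<dots> = (\<Sum>i\<in>I. real (card {S\<in>F. i_informative n f Srch eps \<alpha> \<beta> t r i S}))"
  proof (intro sum.cong refl)
    fix i assume "i \<in> I"
    moreover have "{S\<in>F. i_informative n f Srch eps \<alpha> \<beta> t r i S}
        = {S. S \<subseteq> {..<n} \<and> i_informative n f Srch eps \<alpha> \<beta> t r i S}"
      by (auto simp: F_def i_informative_def)
    ultimately show "real (card {S'. informative n f Srch eps \<alpha> \<beta> t r i S'})
        = real (card {S\<in>F. i_informative n f Srch eps \<alpha> \<beta> t r i S})"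
      using I card_i_informative_supersets by auto
  qed
  also have "\<dots> = (\<Sum>S\<in>F. real (card {i\<in>I. i_informative n f Srch eps \<alpha> \<beta> t r i S}))"
    by (rule sum_card_filter_swap[OF I_fin F])
  also have "\<dots> = (\<Sum>S\<in>F. real (card (informative_set n f Srch eps \<alpha> \<beta> t r I S)))"
    by (intro sum.cong refl arg_cong[where f = "\<lambda>A. real (card A)"])
      (auto simp: informative_set_def i_informative_def)
  finally show ?thesis by (simp add: F_def)
qed

lemma outside_window_le:
  fixes x y \<alpha> :: real
  assumes \<alpha>: "0 < \<alpha>" and xy: "0 \<le> x" "x \<le> y" and outside: "\<not> (\<alpha>/10 \<le> x \<and> x \<le> 4 * \<alpha>)"
  shows "x \<le> \<alpha>/10 + 4 / (9 * \<alpha>) * (y - \<alpha>)\<^sup>2"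
proof (cases "x < \<alpha>/10")
  case True
  then show ?thesis using \<alpha> by (smt (verit) divide_nonneg_pos mult_nonneg_nonneg zero_le_power2)
next
  case False
  then have y: "4 * \<alpha> < y" using outside xy by linarith
  then have "(3/4 * y)\<^sup>2 \<le> (y - \<alpha>)\<^sup>2" using \<alpha> by (intro power_mono) auto
  moreover have "9/4 * \<alpha> * y \<le> (3/4 * y)\<^sup>2"
    using y \<alpha> by (simp add: power2_eq_square)
  ultimately have "4 / (9 * \<alpha>) * (9/4 * \<alpha> * y) \<le> 4 / (9 * \<alpha>) * (y - \<alpha>)\<^sup>2"
    using \<alpha> by (intro mult_left_mono) auto
  then have "y \<le> 4 / (9 * \<alpha>) * (y - \<alpha>)\<^sup>2" using \<alpha> by simp
  then show ?thesis using xy \<alpha> by simp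
qed

lemma card_window_ge_of_mean_variance:
  fixes X Y :: "'a \<Rightarrow> real"
  assumes F: "finite F" and \<alpha>: "16 \<le> \<alpha>"
    and mean: "49/144 * \<alpha> * real (card F) \<le> (\<Sum>S\<in>F. X S)"
    and variance: "(\<Sum>S\<in>F. (Y S - \<alpha>)\<^sup>2) \<le> \<alpha> * real (card F)"
    and XY: "\<And>S. S \<in> F \<Longrightarrow> 0 \<le> X S \<and> X S \<le> Y S"
  shows "real (card F) / 20 \<le> real (card {S\<in>F. \<alpha>/10 \<le> X S \<and> X S \<le> 4 * \<alpha>})"
proof -
  define W where "W S \<longleftrightarrow> \<alpha>/10 \<le> X S \<and> X S \<le> 4 * \<alpha>" for S
  have \<alpha>_pos: "0 < \<alpha>" using \<alpha> by simp
  have pointwise: "X S \<le> (if W S then 4 * \<alpha> else 0) + (\<alpha>/10 + 4 / (9 * \<alpha>) * (Y S - \<alpha>)\<^sup>2)"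
    if "S \<in> F" for S
    using outside_window_le[OF \<alpha>_pos, of "X S" "Y S"] XY[OF that] \<alpha>_pos
    by (cases "W S") (auto simp: W_def intro: add_increasing2)
  have "(\<Sum>S\<in>F. X S) \<le> (\<Sum>S\<in>F. (if W S then 4 * \<alpha> else 0) + (\<alpha>/10 + 4 / (9 * \<alpha>) * (Y S - \<alpha>)\<^sup>2))"
    using pointwise by (rule sum_mono)
  also have "\<dots> = 4 * \<alpha> * real (card {S\<in>F. W S}) + \<alpha>/10 * real (card F)
      + 4 / (9 * \<alpha>) * (\<Sum>S\<in>F. (Y S - \<alpha>)\<^sup>2)"
    using F by (simp add: sum.distrib sum_distrib_left sum.If_cases Int_def conj_commute)
  also have "\<dots> \<le> 4 * \<alpha> * real (card {S\<in>F. W S}) + \<alpha>/10 * real (card F) + 4 / (9 * \<alpha>) * (\<alpha> * real (card F))"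
    using variance \<alpha>_pos by (intro add_left_mono mult_left_mono) auto
  also have "4 / (9 * \<alpha>) * (\<alpha> * real (card F)) \<le> \<alpha> / 36 * real (card F)"
    using \<alpha> \<alpha>_pos by (simp add: field_simps) (metis mult.commute mult_right_mono of_nat_0_le_iff)
  finally have "(49/144 - 1/10 - 1/36) * \<alpha> * real (card F) \<le> 4 * \<alpha> * real (card {S\<in>F. W S})"
    using mean by (simp add: algebra_simps)
  then have "(49/144 - 1/10 - 1/36) * real (card F) \<le> 4 * real (card {S\<in>F. W S})"
    using \<alpha>_pos by (simp add: mult.commute mult.left_commute)
  then show ?thesis by (simp add: W_def)
qed

lemma informative_threshold_le_score:
  fixes eps H k n m s :: real
  assumes eps: "0 < eps" and H: "0 < H" and k: "H * eps\<^sup>2 / 2 \<le> k" and n: "0 < n" and m: "0 < m"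
    and s: "1 / H \<le> s * m / sqrt n"
  shows "0.1 * eps\<^sup>2 / ((k * m / n) * sqrt n) \<le> s / 5"
proof -
  have sqrt_n: "0 < sqrt n" using n by simp
  have k_pos: "0 < k" using eps H k by (smt (verit) half_gt_zero mult_pos_pos zero_less_power)
  have "0.1 * eps\<^sup>2 / ((k * m / n) * sqrt n) = 0.1 * eps\<^sup>2 * (n / sqrt n) / (k * m)"
    using sqrt_n n k_pos by (simp add: field_simps)
  also have "\<dots> = 0.1 * eps\<^sup>2 * sqrt n / (k * m)"
    using n by (simp add: real_div_sqrt)
  also have "\<dots> \<le> 0.1 * eps\<^sup>2 * sqrt n / ((H * eps\<^sup>2 / 2) * m)"
    using eps H k k_pos m sqrt_n by (intro divide_left_mono mult_right_mono mult_pos_pos) auto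
  also have "\<dots> = (sqrt n / (H * m)) / 5" using eps by (simp add: field_simps)
  also have "\<dots> \<le> s / 5" using s sqrt_n H m by (simp add: field_simps)
  finally show ?thesis .
qed

lemma sixteen_le_log_squared:
  assumes "16 \<le> n"
  shows "16 \<le> (log 2 (real n))\<^sup>2"
proof -
  have "4 \<le> log 2 (real n)"
    using assms by (subst le_log_iff) (auto simp: powr_realpow)
  then have "4\<^sup>2 \<le> (log 2 (real n))\<^sup>2" by (rule power_mono) simp
  then show ?thesis by simp
qed

lemma informative_window_count_ge:
  fixes n t r :: nat and I :: "nat set" and H :: real
  defines "\<alpha> \<equiv> real (card I) * 2 ^ t / real n" and "\<beta> \<equiv> real (card I) * 2 ^ r / real n"
  assumes n: "16 \<le> n" and t: "1 \<le> t" "2 ^ t \<le> n" and rt: "r \<le> t"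
    and eps: "0 < eps" and H: "0 < H"
    and I: "I \<subseteq> {..<n}" "H * eps\<^sup>2 / 2 \<le> real (card I)"
    and score_plus: "\<And>i. i \<in> I \<Longrightarrow> 1 / H \<le> score_ij n f Srch True i t * 2 ^ t / sqrt n"
    and score_minus: "\<And>i. i \<in> I \<Longrightarrow> 1 / H \<le> score_ij n f Srch False i r * 2 ^ r / sqrt n"
    and \<alpha>_large: "(log 2 n)\<^sup>2 \<le> \<alpha>"
  shows "real (n choose 2 ^ t) / 20 \<le> real (card {S. S \<subseteq> {..<n} \<and> card S = 2 ^ t \<and>
           \<alpha> / 10 \<le> real (card (informative_set n f Srch eps \<alpha> \<beta> t r I S)) \<and>
           real (card (informative_set n f Srch eps \<alpha> \<beta> t r I S)) \<le> 4 * \<alpha>})"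
proof -
  define m :: nat where "m = 2 ^ t"
  define F where "F = {S. S \<subseteq> {..<n} \<and> card S = m}"
  define X where "X S = real (card (informative_set n f Srch eps \<alpha> \<beta> t r I S))" for S
  have m: "2 \<le> m" "m \<le> n" using t power_increasing[of 1 t "2::nat"] by (auto simp: m_def)
  have \<alpha>_m: "\<alpha> = real (card I) * real m / real n" by (simp add: \<alpha>_def m_def)
  have card_F: "card F = n choose m" by (simp add: F_def n_subsets)
  have score_pos: "0 < score_ij n f Srch s i j" if "1 / H \<le> score_ij n f Srch s i j * 2 ^ j / sqrt n" for s i j
  proof -
    have "0 < score_ij n f Srch s i j * 2 ^ j / sqrt n"
      using that H by (meson less_le_trans zero_less_divide_1_iff)
    then show ?thesis by (simp add: zero_less_divide_iff zero_less_mult_iff)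
  qed
  have per_i: "49/144 * real ((n - 1) choose (m - 1))
      \<le> real (card {S'. informative n f Srch eps \<alpha> \<beta> t r i S'})" if i: "i \<in> I" for i
  proof -
    have "0.1 * eps\<^sup>2 / (\<alpha> * sqrt n) \<le> score_ij n f Srch True i t / 5"
      unfolding \<alpha>_def by (rule informative_threshold_le_score) (use eps H I n score_plus[OF i] in auto)
    moreover have "0.1 * eps\<^sup>2 / (\<beta> * sqrt n) \<le> score_ij n f Srch False i r / 5"
      unfolding \<beta>_def by (rule informative_threshold_le_score) (use eps H I n score_minus[OF i] in auto)
    ultimately have "49/144 * real (card (Pfam n i t)) \<le> real (card {S'. informative n f Srch eps \<alpha> \<beta> t r i S'})"
      using score_pos[OF score_plus[OF i]] score_pos[OF score_minus[OF i]] rt by (intro card_informative_ge)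
    moreover have "i < n" using i I by auto
    ultimately show ?thesis by (simp add: card_Pfam m_def)
  qed
  have "real (card I) * (49/144 * real ((n - 1) choose (m - 1))) \<le> (\<Sum>S\<in>F. X S)"
    using sum_card_informative_set_ge[OF I(1) per_i] by (simp add: F_def X_def m_def)
  moreover have "49/144 * \<alpha> * real (card F) = real (card I) * (49/144 * real ((n - 1) choose (m - 1)))"
    using real_binomial_pred_eq[of m n] m by (simp add: \<alpha>_m card_F)
  ultimately have mean: "49/144 * \<alpha> * real (card F) \<le> (\<Sum>S\<in>F. X S)" by simp
  have variance: "(\<Sum>S\<in>F. (real (card (I \<inter> S)) - \<alpha>)\<^sup>2) \<le> \<alpha> * real (card F)"
    using hypergeometric_variance_le_mean[OF I(1) m] by (simp add: \<alpha>_m F_def n_subsets)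
  have XY: "0 \<le> X S \<and> X S \<le> real (card (I \<inter> S))" if "S \<in> F" for S
    using I(1) finite_subset by (auto simp: X_def informative_set_def intro!: card_mono)
  have "16 \<le> \<alpha>" using sixteen_le_log_squared[OF n] \<alpha>_large by linarith
  from card_window_ge_of_mean_variance[OF _ this mean variance XY] show ?thesis
    by (simp add: F_def X_def m_def n_subsets conj_assoc)
qed

theorem mainTheorem2:
  shows "\<forall>CH::real > 0. \<forall>C\<Lambda>::real > 0. \<exists>c::real > 0. \<exists>N::nat. \<forall>n \<ge> N.
    \<forall>(\<Lambda>::nat) (f::nat set \<Rightarrow> bool) (Srch::nat set \<Rightarrow> nat set \<Rightarrow> nat option pmf)
      (eps::real) (t::nat) (r::nat) (H::nat) (I::nat set).
    (1 \<le> \<Lambda> \<and> 2 ^ \<Lambda> \<le> n \<and> real \<Lambda> \<le> C\<Lambda> * log 2 (real n) \<and>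
     (\<forall>x S. set_pmf (Srch x S) \<subseteq> insert None (Some ` S)) \<and>
     eps > 0 \<and> t \<in> {1..\<Lambda>} \<and> r \<in> {1..\<Lambda>} \<and> r \<le> t \<and>
     (\<exists>k. H = 2 ^ k) \<and> real H \<le> CH * real n / eps\<^sup>2 \<and>
     real H * 2 ^ t \<ge> sqrt (real n) \<and> real H * 2 ^ r \<ge> sqrt (real n) \<and>
     I \<subseteq> {..<n} \<and> I \<noteq> {} \<and> real (card I) \<ge> real H * eps\<^sup>2 / 2 \<and>
     (\<forall>i \<in> I.
        min (score_i n \<Lambda> f Srch True i) (score_i n \<Lambda> f Srch False i)
          = min (score_ij n f Srch True i t * 2 ^ t / sqrt (real n))
                (score_ij n f Srch False i r * 2 ^ r / sqrt (real n)) \<and>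
        min (score_i n \<Lambda> f Srch True i) (score_i n \<Lambda> f Srch False i) \<in> {1 / real H .. 2 / real H}) \<and>
     real (card I) * 2 ^ t / real n \<ge> (log 2 (real n))\<^sup>2)
    \<longrightarrow>
    (let \<alpha> = real (card I) * 2 ^ t / real n;
         \<beta> = real (card I) * 2 ^ r / real n
     in real (card {S. S \<subseteq> {..<n} \<and> card S = 2 ^ t \<and>
                      \<alpha> / 10 \<le> real (card (informative_set n f Srch eps \<alpha> \<beta> t r I S)) \<and>
                      real (card (informative_set n f Srch eps \<alpha> \<beta> t r I S)) \<le> 4 * \<alpha>})
          / real (n choose 2 ^ t) \<ge> c)"
proof ((intro allI impI exI[of _ "1/20 :: real"] conjI exI[of _ "16 :: nat"]; (elim conjE)?), goal_cases)
  case 1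
  then show ?case by simp
next
  case (2 CH C\<Lambda> n \<Lambda> f Srch eps t r H I)
  have H: "0 < real H" using \<open>\<exists>k. H = 2 ^ k\<close> by auto
  have "(2::nat) ^ t \<le> 2 ^ \<Lambda>" using \<open>t \<in> {1..\<Lambda>}\<close> by (intro power_increasing) auto
  then have t: "1 \<le> t" "2 ^ t \<le> n"
    using \<open>t \<in> {1..\<Lambda>}\<close> \<open>2 ^ \<Lambda> \<le> n\<close> by (auto simp del: power_increasing_iff)
  have scores: "1 / real H \<le> score_ij n f Srch True i t * 2 ^ t / sqrt n"
      "1 / real H \<le> score_ij n f Srch False i r * 2 ^ r / sqrt n" if "i \<in> I" for i
    using 2 that by (auto simp: min_def split: if_splits)
  have binom: "0 < real (n choose 2 ^ t)" using t by simp
  note count = informative_window_count_ge[OF \<open>16 \<le> n\<close> t \<open>r \<le> t\<close> \<open>eps > 0\<close> H \<open>I \<subseteq> {..<n}\<close>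
      \<open>real (card I) \<ge> real H * eps\<^sup>2 / 2\<close> scores \<open>real (card I) * 2 ^ t / real n \<ge> (log 2 (real n))\<^sup>2\<close>]
  show ?case
    unfolding Let_def
  proof (rule order_trans[OF _ divide_right_mono[OF count]])
    show "1 / 20 \<le> real (n choose 2 ^ t) / 20 / real (n choose 2 ^ t)" using binom by simp
  qed simp_all
qed

end
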